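(* The category $\mathsf{BA}^\mathsf{S}$ is dually isomorphic to the category $\mathsf{BA}^\mathsf{Q}$. Explicitly, the assignments (identity on objects) sending a subordination $S\colon A\to B$ to the quasi-semi-homomorphism $\Delta_S\colon B\to\mathcal J(A)$, $\Delta_S(b)=S^{-1}[b]=\{a\in A\mid a\mathrel{S}b\}$, and sending a quasi-semi-homomorphism $\Delta\colon A\to\mathcal J(B)$ to the subordination $S_\Delta\colon B\to A$, $b\mathrel{S_\Delta}a \iff b\in\Delta(a)$, are well-defined contravariant functors that are mutually inverse.
   Context: For a boolean algebra $B$, $\mathcal J(B)$ denotes the set of ideals of $B$. A quasi-semi-homomorphism from a boolean algebra $A$ to a boolean algebra $B$ is a function $\Delta\colon A\to\mathcal J(B)$ with $\Delta(1)=B$ and $\Delta(a\wedge b)=\Delta(a)\cap\Delta(b)$ for all $a,b\in A$. $\mathsf{BA}^\mathsf{Q}$ is the category of boolean algebras and quasi-semi-homomorphisms, where the identity on $A$ is $a\mapsto{\downarrow}a$ and the composite of $\Delta_1\colon A\to\mathcal J(B)$ and $\Delta_2\colon B\to\mathcal J(C)$ is $(\Delta_2\circ\Delta_1)(a)=\bigcup\{\Delta_2(b)\mid b\in\Delta_1(a)\}$. A subordination relation from a boolean algebra $A$ to a boolean algebra $B$ is a relation $S\subseteq A\times B$ (written $a\mathrel{S}c$) such that for $a,b\in A$, $c,d\in B$: (S1) $0\mathrel{S}0$ and $1\mathrel{S}1$; (S2) $a\mathrel{S}c$ and $b\mathrel{S}c$ imply $(a\vee b)\mathrel{S}c$; (S3)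 $a\mathrel{S}c$ and $a\mathrel{S}d$ imply $a\mathrel{S}(c\wedge d)$; (S4) $a\le b$, $b\mathrel{S}c$, $c\le d$ imply $a\mathrel{S}d$. $\mathsf{BA}^\mathsf{S}$ is the category of boolean algebras and subordination relations; the identity on $A$ is the order $\le_A$ and composition is relational composition: for $S_1\colon A\to B$, $S_2\colon B\to C$, $a\mathrel{(S_2\circ S_1)}c$ iff there is $b\in B$ with $a\mathrel{S_1}b$ and $b\mathrel{S_2}c$. *)

theory Defs
  imports Main
begin

definition is_ideal :: "'a::boolean_algebra set \<Rightarrow> bool" where
  "is_ideal I \<longleftrightarrow> bot \<in> I \<and> (\<forall>a b. a \<in> I \<longrightarrow> b \<in> I \<longrightarrow> sup a b \<in> I)
      \<and> (\<forall>a b. a \<le> b \<longrightarrow> b \<in> I \<longrightarrow> a \<in> I)"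

definition qsh :: "('a::boolean_algebra \<Rightarrow> 'b::boolean_algebra set) \<Rightarrow> bool" where
  "qsh D \<longleftrightarrow> (\<forall>a. is_ideal (D a)) \<and> D top = UNIV \<and> (\<forall>a b. D (inf a b) = D a \<inter> D b)"

definition qid :: "'a::boolean_algebra \<Rightarrow> 'a set" where
  "qid a = {x. x \<le> a}"

definition qcomp :: "('b::boolean_algebra \<Rightarrow> 'c::boolean_algebra set) \<Rightarrow> ('a::boolean_algebra \<Rightarrow> 'b set) \<Rightarrow> 'a \<Rightarrow> 'c set" where
  "qcomp D2 D1 a = \<Union>{D2 b | b. b \<in> D1 a}"

definition subord :: "('a::boolean_algebra \<Rightarrow> 'b::boolean_algebra \<Rightarrow> bool) \<Rightarrow> bool" where
  "subord S \<longleftrightarrow> S bot bot \<and> S top top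
     \<and> (\<forall>a b c. S a c \<longrightarrow> S b c \<longrightarrow> S (sup a b) c)
     \<and> (\<forall>a c d. S a c \<longrightarrow> S a d \<longrightarrow> S a (inf c d))
     \<and> (\<forall>a b c d. a \<le> b \<longrightarrow> S b c \<longrightarrow> c \<le> d \<longrightarrow> S a d)"

definition sid :: "'a::boolean_algebra \<Rightarrow> 'a \<Rightarrow> bool" where
  "sid a b \<longleftrightarrow> a \<le> b"

definition scomp :: "('b::boolean_algebra \<Rightarrow> 'c::boolean_algebra \<Rightarrow> bool) \<Rightarrow> ('a::boolean_algebra \<Rightarrow> 'b \<Rightarrow> bool) \<Rightarrow> 'a \<Rightarrow> 'c \<Rightarrow> bool" where
  "scomp S2 S1 a c \<longleftrightarrow> (\<exists>b. S1 a b \<and> S2 b c)"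

definition delta_of :: "('a::boolean_algebra \<Rightarrow> 'b::boolean_algebra \<Rightarrow> bool) \<Rightarrow> 'b \<Rightarrow> 'a set" where
  "delta_of S b = {a. S a b}"

definition sub_of :: "('a::boolean_algebra \<Rightarrow> 'b::boolean_algebra set) \<Rightarrow> 'b \<Rightarrow> 'a \<Rightarrow> bool" where
  "sub_of D b a \<longleftrightarrow> b \<in> D a"

end

theory Submission
  imports Defs
begin

text \<open>A relation \<open>S \<subseteq> A \<times> B\<close> and a map \<open>B \<rightarrow> \<P>(A)\<close> are the same data read in two
  ways, so \<open>delta_of\<close> and \<open>sub_of\<close> are mutually inverse, and they exchange relational
  composition with the union-composite of \<open>BA\<^sup>Q\<close> for arbitrary relations. The only
  content is that the axioms match: (S1) and (S2) with left monotonicity of (S4) say that every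
  \<open>S\<inverse>[b]\<close> is an ideal, while (S1), (S3) and right monotonicity of (S4) say that
  \<open>b \<mapsto> S\<inverse>[b]\<close> sends \<open>1\<close> to \<open>A\<close> and meets to intersections.\<close>

lemma subordE:
  assumes "subord S"
  obtains "S bot bot" and "S top top"
    and "\<And>a b c. S a c \<Longrightarrow> S b c \<Longrightarrow> S (sup a b) c"
    and "\<And>a c d. S a c \<Longrightarrow> S a d \<Longrightarrow> S a (inf c d)"
    and "\<And>a b c d. a \<le> b \<Longrightarrow> S b c \<Longrightarrow> c \<le> d \<Longrightarrow> S a d"
  using assms unfolding subord_def by (elim conjE) (rule that; simp)

lemma is_ideal_delta_of:
  assumes "subord S"
  shows "is_ideal (delta_of S b)"
  using assms
proof (rule subordE)
  assume bot: "S bot bot" and sup: "\<And>a a' c. S a c \<Longrightarrow> S a' c \<Longrightarrow> S (sup a a') c"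
    and mono: "\<And>a a' c d. a \<le> a' \<Longrightarrow> S a' c \<Longrightarrow> c \<le> d \<Longrightarrow> S a d"
  have "S bot b" using mono[OF order_refl bot bot_least] .
  moreover have "S x b" if "x \<le> y" "S y b" for x y using mono[OF that order_refl] .
  ultimately show ?thesis
    unfolding is_ideal_def delta_of_def by (auto intro: sup)
qed

lemma delta_of_top:
  assumes "subord S"
  shows "delta_of S top = UNIV"
  using assms
proof (rule subordE)
  assume "S top top" and "\<And>a a' c d. a \<le> a' \<Longrightarrow> S a' c \<Longrightarrow> c \<le> d \<Longrightarrow> S a d"
  then have "S a top" for a using top_greatest order_refl by blast
  then show ?thesis unfolding delta_of_def by blast
qed

lemma delta_of_inf:
  assumes "subord S"
  shows "delta_of S (inf b c) = delta_of S b \<inter> delta_of S c"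
  using assms
proof (rule subordE)
  assume inf: "\<And>a c d. S a c \<Longrightarrow> S a d \<Longrightarrow> S a (inf c d)"
    and mono: "\<And>a a' c d. a \<le> a' \<Longrightarrow> S a' c \<Longrightarrow> c \<le> d \<Longrightarrow> S a d"
  have "S a b \<and> S a c" if "S a (inf b c)" for a
    using mono[OF order_refl that] by simp
  then show ?thesis unfolding delta_of_def using inf by blast
qed

lemma qsh_delta_of: "subord S \<Longrightarrow> qsh (delta_of S)"
  unfolding qsh_def using is_ideal_delta_of delta_of_top delta_of_inf by blast

lemma subord_sub_of:
  assumes "qsh D"
  shows "subord (sub_of D)"
proof -
  have top: "D top = UNIV" and inf: "\<And>a b. D (inf a b) = D a \<inter> D b"
    using assms unfolding qsh_def by blast+
  have bot: "bot \<in> D c" and sup: "\<And>a b. a \<in> D c \<Longrightarrow> b \<in> D c \<Longrightarrow> sup a b \<in> D c"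
    and down: "\<And>a b. a \<le> b \<Longrightarrow> b \<in> D c \<Longrightarrow> a \<in> D c" for c
    using assms unfolding qsh_def is_ideal_def by blast+
  have mono: "D a \<subseteq> D b" if "a \<le> b" for a b
  proof -
    have "D a = D (inf a b)" using that by (simp add: inf.absorb1)
    then show ?thesis using inf by blast
  qed
  have "a \<in> D d" if "a \<le> b" "b \<in> D c" "c \<le> d" for a b c d
    using down[OF \<open>a \<le> b\<close>] mono[OF \<open>c \<le> d\<close>] \<open>b \<in> D c\<close> by blast
  then show ?thesis
    unfolding subord_def sub_of_def using bot sup top inf by simp
qed

lemma delta_of_sid: "delta_of sid = qid"
  by (simp add: fun_eq_iff delta_of_def sid_def qid_def)

lemma sub_of_qid: "sub_of qid = sid"
  by (simp add: fun_eq_iff sub_of_def sid_def qid_def)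

lemma delta_of_scomp: "delta_of (scomp S2 S1) = qcomp (delta_of S1) (delta_of S2)"
  by (auto simp: fun_eq_iff delta_of_def scomp_def qcomp_def)

lemma sub_of_qcomp: "sub_of (qcomp D2 D1) = scomp (sub_of D1) (sub_of D2)"
  by (auto simp: fun_eq_iff sub_of_def scomp_def qcomp_def)

lemma sub_of_delta_of: "sub_of (delta_of S) = S"
  by (simp add: fun_eq_iff sub_of_def delta_of_def)

lemma delta_of_sub_of: "delta_of (sub_of D) = D"
  by (simp add: fun_eq_iff sub_of_def delta_of_def)

theorem theorem2p5:
  shows
  "(\<forall>S :: 'a::boolean_algebra \<Rightarrow> 'b::boolean_algebra \<Rightarrow> bool. subord S \<longrightarrow> qsh (delta_of S))
 \<and> (\<forall>D :: 'a::boolean_algebra \<Rightarrow> 'b::boolean_algebra set. qsh D \<longrightarrow> subord (sub_of D))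
 \<and> delta_of (sid :: 'a \<Rightarrow> 'a \<Rightarrow> bool) = qid
 \<and> sub_of (qid :: 'a \<Rightarrow> 'a set) = sid
 \<and> (\<forall>(S1 :: 'a \<Rightarrow> 'b \<Rightarrow> bool) (S2 :: 'b \<Rightarrow> 'c::boolean_algebra \<Rightarrow> bool).
      subord S1 \<longrightarrow> subord S2 \<longrightarrow> delta_of (scomp S2 S1) = qcomp (delta_of S1) (delta_of S2))
 \<and> (\<forall>(D1 :: 'a \<Rightarrow> 'b set) (D2 :: 'b \<Rightarrow> 'c set).
      qsh D1 \<longrightarrow> qsh D2 \<longrightarrow> sub_of (qcomp D2 D1) = scomp (sub_of D1) (sub_of D2))
 \<and> (\<forall>S :: 'a \<Rightarrow> 'b \<Rightarrow> bool. subord S \<longrightarrow> sub_of (delta_of S) = S)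
 \<and> (\<forall>D :: 'a \<Rightarrow> 'b set. qsh D \<longrightarrow> delta_of (sub_of D) = D)"
  by (simp add: qsh_delta_of subord_sub_of delta_of_sid sub_of_qid delta_of_scomp
      sub_of_qcomp sub_of_delta_of delta_of_sub_of)

end
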